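(* Let $p,m\ge1$ be integers with $p+\frac m2>1$. Then the minimal operator $\mathbb{H}$ generated by the generalized Heun operator $H^{p,m}$ in $\mathbb{B}_p$ is completely indeterminate: its deficiency indices satisfy $n_+(\mathbb{H})=n_-(\mathbb{H})=m$.
   Context: $\mathbb{B}$ is the Bargmann space of entire functions $\varphi$ with $\frac1\pi\int_{\mathbb{C}}|\varphi|^2e^{-|z|^2}dxdy<\infty$, orthonormal basis $e_k(z)=z^k/\sqrt{k!}$. Annihilation and creation operators: $A\varphi=\varphi'$, $A^*\varphi=z\varphi$. The generalized Heun operator is $H^{p,m}=A^{*p}(A^m+A^{*m})A^p$, i.e. $H^{p,m}\varphi=z^p\varphi^{(p+m)}+z^{p+m}\varphi^{(p)}$; on the basis: $H^{p,m}e_k=0$ for $k<p$; $H^{p,m}e_k=\frac{\sqrt{k!(k+m)!}}{(k-p)!}e_{k+m}$ for $p\le k<p+m$; $H^{p,m}e_k=\frac{\sqrt{k!(k-m)!}}{(k-p-m)!}e_{k-m}+\frac{\sqrt{k!(k+m)!}}{(k-p)!}e_{k+m}$ for $k\ge p+m$. $\mathbb{B}_p=\{\varphi\in\mathbb{B}:\varphi(0)=\varphi'(0)=\dots=\varphi^{(p-1)}(0)=0\}$, the closed span of $\{e_k\}_{k\ge p}$. $\mathbb{H}$ is the closure in $\mathbb{B}_p$ of the restriction of $H^{p,m}$ to polynomials lying in $\mathbb{B}_p$; it is a closed symmetric operator. Deficiency indices: $n_\pm(\mathbb{H})=\dim\ker(\mathbb{H}^*\mp iI)$. A closed symmetric operator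 whose block Jacobi matrix has $m\times m$ blocks is called completely indeterminate if $n_+=n_-=m$. *)

theory Defs
  imports "HOL-Analysis.Analysis" "HOL-Library.Function_Algebras"
begin

text \<open>Model: the Bargmann space is identified (unitarily) with l2(N) via the orthonormal
basis e_k = z^k / sqrt(k!); an element phi = sum c_k e_k is its coefficient sequence c.\<close>

definition l2 :: "(nat \<Rightarrow> complex) set" where
  "l2 = {c. summable (\<lambda>k. (cmod (c k))\<^sup>2)}"

definition l2_norm :: "(nat \<Rightarrow> complex) \<Rightarrow> real" where
  "l2_norm c = sqrt (\<Sum>k. (cmod (c k))\<^sup>2)"

definition l2_inner :: "(nat \<Rightarrow> complex) \<Rightarrow> (nat \<Rightarrow> complex) \<Rightarrow> complex" where
  "l2_inner c d = (\<Sum>k. c k * cnj (d k))"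

definition Bp :: "nat \<Rightarrow> (nat \<Rightarrow> complex) set" where
  "Bp p = {c \<in> l2. \<forall>k<p. c k = 0}"

text \<open>Polynomials lying in B_p: finitely supported coefficient sequences vanishing below p.\<close>
definition poly_Bp :: "nat \<Rightarrow> (nat \<Rightarrow> complex) set" where
  "poly_Bp p = {c. finite {k. c k \<noteq> 0} \<and> (\<forall>k<p. c k = 0)}"

text \<open>Matrix entries: H e_k = heun_up p m k * e_(k+m) + heun_down p m k * e_(k-m).\<close>
definition heun_up :: "nat \<Rightarrow> nat \<Rightarrow> nat \<Rightarrow> complex" where
  "heun_up p m k = (if p \<le> k then
      complex_of_real (sqrt (fact k * fact (k + m)) / fact (k - p)) else 0)"

definition heun_down :: "nat \<Rightarrow> nat \<Rightarrow> nat \<Rightarrow> complex" where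
  "heun_down p m k = (if p + m \<le> k then
      complex_of_real (sqrt (fact k * fact (k - m)) / fact (k - p - m)) else 0)"

definition heun_apply :: "nat \<Rightarrow> nat \<Rightarrow> (nat \<Rightarrow> complex) \<Rightarrow> (nat \<Rightarrow> complex)" where
  "heun_apply p m c j =
     (if m \<le> j then heun_up p m (j - m) * c (j - m) else 0)
     + heun_down p m (j + m) * c (j + m)"

definition heun_min_graph :: "nat \<Rightarrow> nat \<Rightarrow> ((nat \<Rightarrow> complex) \<times> (nat \<Rightarrow> complex)) set" where
  "heun_min_graph p m = {(f, g). f \<in> Bp p \<and> g \<in> Bp p \<and>
      (\<exists>u. (\<forall>n. u n \<in> poly_Bp p) \<and>
           (\<lambda>n. l2_norm (u n - f)) \<longlonglongrightarrow> 0 \<and>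
           (\<lambda>n. l2_norm (heun_apply p m (u n) - g)) \<longlonglongrightarrow> 0)}"

definition heun_adj_graph :: "nat \<Rightarrow> nat \<Rightarrow> ((nat \<Rightarrow> complex) \<times> (nat \<Rightarrow> complex)) set" where
  "heun_adj_graph p m = {(g, h). g \<in> Bp p \<and> h \<in> Bp p \<and>
      (\<forall>(f, u) \<in> heun_min_graph p m. l2_inner u g = l2_inner f h)}"

definition seq_scale :: "complex \<Rightarrow> (nat \<Rightarrow> complex) \<Rightarrow> (nat \<Rightarrow> complex)" where
  "seq_scale a c = (\<lambda>k. a * c k)"

definition heun_adj_kernel :: "nat \<Rightarrow> nat \<Rightarrow> complex \<Rightarrow> (nat \<Rightarrow> complex) set" where
  "heun_adj_kernel p m lam = {g. (g, seq_scale lam g) \<in> heun_adj_graph p m}"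

definition def_plus :: "nat \<Rightarrow> nat \<Rightarrow> nat" where
  "def_plus p m = vector_space.dim seq_scale (heun_adj_kernel p m \<i>)"

definition def_minus :: "nat \<Rightarrow> nat \<Rightarrow> nat" where
  "def_minus p m = vector_space.dim seq_scale (heun_adj_kernel p m (- \<i>))"

end

theory Submission
  imports Defs
begin

(* On the basis e_k the operator H is a three-term recurrence with step m, symmetric on
   finitely supported sequences.  Testing H* against the e_j, and approximating in the other
   direction, shows that ker(H* - lambda) consists of the square-summable formal solutions of
   H g = lambda g vanishing below p.  A formal solution is determined by its m free values
   g_p, ..., g_(p+m-1), so these solutions form an m-dimensional space.  All of them are
   square summable: the off-diagonal coefficients b_t ~ t^(p+m/2) of the recurrence are
   log-concave along steps m with bounded ratios, and sum 1/b_t < oo because p + m/2 > 1.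
   Then s_t = sqrt b_t |g_t| obeys s_(t+2m) <= s_t + e_(t+m) s_(t+m) with e summable, a
   discrete Gronwall argument bounds s, and |g_t|^2 <= K^2 / b_t. *)

lemma pochhammer_ge_power:
  fixes x :: real
  assumes "0 \<le> x"
  shows "x ^ n \<le> pochhammer x n"
proof -
  have "x ^ n = (\<Prod>i\<in>{0..<n}. x)" by simp
  also have "\<dots> \<le> pochhammer x n"
    unfolding pochhammer_prod using assms by (intro prod_mono) auto
  finally show ?thesis .
qed

lemma pochhammer_log_concave:
  fixes x d :: real
  assumes "0 \<le> x" "0 \<le> d"
  shows "pochhammer x n * pochhammer (x + 2 * d) n \<le> (pochhammer (x + d) n)\<^sup>2"
proof -
  have "pochhammer x n * pochhammer (x + 2 * d) n = (\<Prod>i\<in>{0..<n}. (x + i) * (x + 2 * d + i))"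
    by (simp add: pochhammer_prod prod.distrib)
  also have "\<dots> \<le> (\<Prod>i\<in>{0..<n}. (x + d + i)\<^sup>2)"
  proof (intro prod_mono conjI)
    fix i :: nat
    show "0 \<le> (x + i) * (x + 2 * d + i)" using assms by simp
    have "(x + d + i)\<^sup>2 = (x + i) * (x + 2 * d + i) + d\<^sup>2"
      by (simp add: power2_eq_square algebra_simps)
    then show "(x + i) * (x + 2 * d + i) \<le> (x + d + i)\<^sup>2" by simp
  qed
  also have "\<dots> = (pochhammer (x + d) n)\<^sup>2"
    by (simp add: pochhammer_prod prod_power_distrib)
  finally show ?thesis .
qed

lemma pochhammer_shift_le:
  fixes x d :: real
  assumes "1 \<le> x" "0 \<le> d"
  shows "pochhammer (x + d) n \<le> (1 + d) ^ n * pochhammer x n"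
proof -
  have "pochhammer (x + d) n \<le> (\<Prod>i\<in>{0..<n}. (1 + d) * (x + i))"
    unfolding pochhammer_prod
  proof (intro prod_mono conjI)
    fix i :: nat
    show "0 \<le> x + d + i" using assms by simp
    have "d * 1 \<le> d * (x + i)" using assms by (intro mult_left_mono) auto
    then show "x + d + i \<le> (1 + d) * (x + i)" by (simp add: algebra_simps)
  qed
  also have "\<dots> = (1 + d) ^ n * pochhammer x n"
    by (simp add: pochhammer_prod prod.distrib)
  finally show ?thesis .
qed

lemma fact_add_eq_fact_mult_pochhammer:
  "(fact (a + n) :: 'a::{comm_semiring_1,semiring_char_0}) = fact a * pochhammer (of_nat a + 1) n"
  by (simp add: pochhammer_fact pochhammer_product' add.commute)

lemma lagged_recursion_bounded:
  fixes s e :: "nat \<Rightarrow> real"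
  assumes "m \<ge> 1" and s_nonneg: "\<And>t. 0 \<le> s t" and e_nonneg: "\<And>t. 0 \<le> e t"
    and "summable e"
    and step: "\<And>t. s (t + 2 * m) \<le> s t + e (t + m) * s (t + m)"
  shows "\<exists>K. \<forall>t. s t \<le> K"
proof -
  define U where "U = (\<Sum>i<2 * m. s i)"
  define E where "E n = (\<Sum>k<n. e k)" for n
  have E_mono: "E k \<le> E n" if "k \<le> n" for k n
    unfolding E_def using that e_nonneg by (intro sum_mono2) auto
  have "0 \<le> U" unfolding U_def using s_nonneg by (simp add: sum_nonneg)
  have bound: "s n \<le> U * exp (E n)" for n
  proof (induction n rule: less_induct)
    case (less n)
    show ?case
    proof (cases "n < 2 * m")
      case True
      have "s n \<le> U" unfolding U_def using True s_nonneg by (intro member_le_sum) auto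
      also have "\<dots> \<le> U * exp (E n)"
        using \<open>0 \<le> U\<close> E_mono[of 0 n] by (simp add: E_def mult_le_cancel_left1)
      finally show ?thesis .
    next
      case False
      define t where "t = n - 2 * m"
      have n: "n = t + 2 * m" using False by (simp add: t_def)
      have IH: "s t \<le> U * exp (E (t + m))" "s (t + m) \<le> U * exp (E (t + m))"
        using less.IH[of t] less.IH[of "t + m"] E_mono[of t "t + m"] \<open>0 \<le> U\<close>
          \<open>m \<ge> 1\<close> n
        by (auto intro: order_trans mult_left_mono)
      have "s n \<le> s t + e (t + m) * s (t + m)" using step[of t] n by simp
      also have "\<dots> \<le> U * exp (E (t + m)) * (1 + e (t + m))"
        using IH e_nonneg[of "t + m"] mult_left_mono[OF IH(2) e_nonneg[of "t + m"]]
        by (simp add: algebra_simps)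
      also have "\<dots> \<le> U * exp (E (t + m)) * exp (e (t + m))"
        using \<open>0 \<le> U\<close> by (intro mult_left_mono) auto
      also have "\<dots> = U * exp (E (Suc (t + m)))" by (simp add: E_def exp_add)
      also have "\<dots> \<le> U * exp (E n)"
        using E_mono[of "Suc (t + m)" n] \<open>0 \<le> U\<close> \<open>m \<ge> 1\<close> n
        by (intro mult_left_mono) auto
      finally show ?thesis .
    qed
  qed
  have "s n \<le> U * exp (suminf e)" for n
    using bound[of n] sum_le_suminf[OF \<open>summable e\<close>, of "{..<n}"] e_nonneg \<open>0 \<le> U\<close>
    unfolding E_def by (auto intro: order_trans mult_left_mono)
  then show ?thesis by blast
qed

lemma three_term_step_bound:
  fixes b0 b1 b2 C :: real and y0 y1 y2 lam :: complex
  assumes pos: "0 < b0" "0 < b1" "0 < b2"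
    and log_concave: "b0 * b2 \<le> b1\<^sup>2" and ratio: "b2 \<le> C * b1"
    and rec: "of_real b1 * y2 + of_real b0 * y0 = lam * y1"
  shows "sqrt b2 * cmod y2 \<le> sqrt b0 * cmod y0 + cmod lam * sqrt C / b1 * (sqrt b1 * cmod y1)"
proof -
  have "b1 * cmod y2 = cmod (lam * y1 - of_real b0 * y0)"
    using rec pos by (metis abs_of_pos add_diff_cancel_right' norm_mult norm_of_real)
  also have "\<dots> \<le> cmod lam * cmod y1 + b0 * cmod y0"
    using pos by (metis abs_of_pos norm_mult norm_of_real norm_triangle_ineq4)
  finally have y2: "cmod y2 \<le> b0 / b1 * cmod y0 + cmod lam / b1 * cmod y1"
    using pos by (simp add: field_simps)
  have "sqrt b2 * b0 = sqrt b0 * sqrt (b0 * b2)"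
    using pos by (simp add: real_sqrt_mult mult_ac)
  also have "\<dots> \<le> sqrt b0 * b1"
    using log_concave pos by (intro mult_left_mono real_le_lsqrt) auto
  finally have coeff_y0: "sqrt b2 * (b0 / b1) \<le> sqrt b0"
    using pos by (simp add: field_simps)
  have coeff_y1: "sqrt b2 \<le> sqrt C * sqrt b1"
    using ratio by (simp add: real_sqrt_mult[symmetric])
  have "sqrt b2 * cmod y2 \<le> sqrt b2 * (b0 / b1) * cmod y0 + sqrt b2 * (cmod lam / b1) * cmod y1"
    using mult_left_mono[OF y2 real_sqrt_ge_zero[OF less_imp_le[OF pos(3)]]]
    by (simp add: algebra_simps)
  also have "\<dots> \<le> sqrt b0 * cmod y0 + sqrt C * sqrt b1 * (cmod lam / b1) * cmod y1"
    using coeff_y0 coeff_y1 pos by (intro add_mono mult_right_mono) auto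
  finally show ?thesis by (simp add: mult_ac)
qed

lemma three_term_recurrence_square_summable:
  fixes b :: "nat \<Rightarrow> real" and y :: "nat \<Rightarrow> complex"
  assumes "m \<ge> 1" and pos: "\<And>t. 0 < b t"
    and log_concave: "\<And>t. b t * b (t + 2 * m) \<le> (b (t + m))\<^sup>2"
    and ratio: "\<And>t. b (t + m) \<le> C * b t"
    and summable_inverse: "summable (\<lambda>t. 1 / b t)"
    and rec: "\<And>t. of_real (b (t + m)) * y (t + 2 * m) + of_real (b t) * y t = lam * y (t + m)"
  shows "summable (\<lambda>t. (cmod (y t))\<^sup>2)"
proof -
  define s where "s t = sqrt (b t) * cmod (y t)" for t
  define e where "e t = cmod lam * sqrt C / b t" for t
  have "0 < C * b 0" using pos[of m] ratio[of 0] by simp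
  then have "0 < C" using pos[of 0] by (rule zero_less_mult_pos2)
  then have e_nonneg: "0 \<le> e t" for t using pos[of t] by (simp add: e_def)
  have s_nonneg: "0 \<le> s t" for t using pos[of t] by (simp add: s_def)
  have "s (t + 2 * m) \<le> s t + e (t + m) * s (t + m)" for t
  proof -
    have "b (t + 2 * m) \<le> C * b (t + m)" using ratio[of "t + m"] by (simp add: mult_2 add.assoc)
    from three_term_step_bound[OF pos pos pos log_concave this rec[of t]] show ?thesis
      by (simp add: s_def e_def)
  qed
  moreover have "summable e"
    unfolding e_def using summable_mult[OF summable_inverse, of "cmod lam * sqrt C"] by simp
  ultimately obtain K where K: "\<And>t. s t \<le> K"
    using lagged_recursion_bounded[of m s e] \<open>m \<ge> 1\<close> s_nonneg e_nonneg by blast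
  show ?thesis
  proof (rule summable_comparison_test')
    show "summable (\<lambda>t. K\<^sup>2 * (1 / b t))" using summable_inverse by (rule summable_mult)
    fix t
    have "(cmod (y t))\<^sup>2 = (s t)\<^sup>2 / b t" using pos[of t] by (simp add: s_def power_mult_distrib)
    also have "\<dots> \<le> K\<^sup>2 / b t"
      using K[of t] s_nonneg[of t] pos[of t] by (intro divide_right_mono power_mono) auto
    finally show "norm ((cmod (y t))\<^sup>2) \<le> K\<^sup>2 * (1 / b t)" by simp
  qed
qed

lemma l2_finite_support: "finite {k. c k \<noteq> 0} \<Longrightarrow> c \<in> l2"
  unfolding l2_def mem_Collect_eq by (rule summable_finite) auto

lemma l2_scale: "c \<in> l2 \<Longrightarrow> seq_scale a c \<in> l2"
  unfolding l2_def seq_scale_def by (simp add: norm_mult power_mult_distrib summable_mult)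

lemma l2_diff:
  assumes "c \<in> l2" "d \<in> l2"
  shows "c - d \<in> l2"
  unfolding l2_def
proof (simp, rule summable_comparison_test')
  show "summable (\<lambda>k. 2 * (cmod (c k))\<^sup>2 + 2 * (cmod (d k))\<^sup>2)"
    using assms unfolding l2_def by (intro summable_add summable_mult) auto
  fix k
  have "(cmod (c k - d k))\<^sup>2 \<le> (cmod (c k) + cmod (d k))\<^sup>2"
    by (intro power_mono norm_triangle_ineq4) auto
  also have "\<dots> \<le> 2 * (cmod (c k))\<^sup>2 + 2 * (cmod (d k))\<^sup>2"
    using sum_squares_bound[of "cmod (c k)" "cmod (d k)"] by (simp add: power2_sum)
  finally show "norm ((cmod (c k - d k))\<^sup>2) \<le> 2 * (cmod (c k))\<^sup>2 + 2 * (cmod (d k))\<^sup>2"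
    by simp
qed

lemma summable_l2_product:
  assumes "c \<in> l2" "d \<in> l2"
  shows "summable (\<lambda>k. cmod (c k) * cmod (d k))"
proof (rule summable_comparison_test')
  show "summable (\<lambda>k. (cmod (c k))\<^sup>2 + (cmod (d k))\<^sup>2)"
    using assms unfolding l2_def by (intro summable_add) auto
  fix k
  have "cmod (c k) * cmod (d k) \<le> (cmod (c k))\<^sup>2 + (cmod (d k))\<^sup>2"
    using sum_squares_bound[of "cmod (c k)" "cmod (d k)"]
      mult_nonneg_nonneg[OF norm_ge_zero[of "c k"] norm_ge_zero[of "d k"]]
    unfolding mult.assoc by linarith
  then show "norm (cmod (c k) * cmod (d k)) \<le> (cmod (c k))\<^sup>2 + (cmod (d k))\<^sup>2" by simp
qed

lemma summable_l2_inner: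
  assumes "c \<in> l2" "d \<in> l2"
  shows "summable (\<lambda>k. c k * cnj (d k))"
  by (rule summable_norm_cancel) (use summable_l2_product[OF assms] in \<open>simp add: norm_mult\<close>)

lemma l2_inner_Cauchy_Schwarz:
  assumes "c \<in> l2" "d \<in> l2"
  shows "cmod (l2_inner c d) \<le> l2_norm c * l2_norm d"
proof -
  have sc: "summable (\<lambda>k. (cmod (c k))\<^sup>2)" and sd: "summable (\<lambda>k. (cmod (d k))\<^sup>2)"
    using assms unfolding l2_def by auto
  have "cmod (l2_inner c d) \<le> (\<Sum>k. cmod (c k) * cmod (d k))"
    unfolding l2_inner_def
    using summable_norm[of "\<lambda>k. c k * cnj (d k)"] summable_l2_product[OF assms]
    by (simp add: norm_mult)
  also have "\<dots> \<le> l2_norm c * l2_norm d"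
  proof (rule suminf_le_const[OF summable_l2_product[OF assms]])
    fix n
    have "(\<Sum>k<n. cmod (c k) * cmod (d k))
        \<le> L2_set (\<lambda>k. cmod (c k)) {..<n} * L2_set (\<lambda>k. cmod (d k)) {..<n}"
      using L2_set_mult_ineq[of "\<lambda>k. cmod (c k)" "\<lambda>k. cmod (d k)" "{..<n}"] by simp
    also have "\<dots> \<le> l2_norm c * l2_norm d"
      unfolding L2_set_def l2_norm_def using sc sd
      by (intro mult_mono real_sqrt_le_mono sum_le_suminf) (auto intro!: suminf_nonneg sum_nonneg)
    finally show "(\<Sum>k<n. cmod (c k) * cmod (d k)) \<le> l2_norm c * l2_norm d" .
  qed
  finally show ?thesis .
qed

lemma l2_inner_diff_left:
  assumes "c \<in> l2" "c' \<in> l2" "d \<in> l2"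
  shows "l2_inner (c - c') d = l2_inner c d - l2_inner c' d"
  unfolding l2_inner_def
  using suminf_diff[OF summable_l2_inner[OF assms(1,3)] summable_l2_inner[OF assms(2,3)]]
  by (simp add: algebra_simps)

lemma tendsto_l2_inner_left:
  assumes "\<And>n. x n \<in> l2" "z \<in> l2" "d \<in> l2"
    and "(\<lambda>n. l2_norm (x n - z)) \<longlonglongrightarrow> 0"
  shows "(\<lambda>n. l2_inner (x n) d) \<longlonglongrightarrow> l2_inner z d"
proof -
  have "(\<lambda>n. l2_inner (x n) d - l2_inner z d) \<longlonglongrightarrow> 0"
  proof (rule Lim_null_comparison)
    show "\<forall>\<^sub>F n in sequentially.
        norm (l2_inner (x n) d - l2_inner z d) \<le> l2_norm (x n - z) * l2_norm d"
      using l2_inner_Cauchy_Schwarz[OF l2_diff[OF assms(1,2)] assms(3)]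
        l2_inner_diff_left[OF assms(1,2,3)]
      by (simp add: always_eventually)
    show "(\<lambda>n. l2_norm (x n - z) * l2_norm d) \<longlonglongrightarrow> 0"
      using tendsto_mult_left_zero[OF assms(4)] by simp
  qed
  then show ?thesis by (rule Lim_null[THEN iffD2])
qed

lemma finite_support_iff_eventually_zero:
  fixes f :: "nat \<Rightarrow> 'a::zero"
  shows "finite {k. f k \<noteq> 0} \<longleftrightarrow> (\<exists>N. \<forall>k\<ge>N. f k = 0)"
proof -
  have "(\<forall>k\<in>{k. f k \<noteq> 0}. k < N) \<longleftrightarrow> (\<forall>k\<ge>N. f k = 0)" for N
    by (auto simp flip: not_le)
  then show ?thesis unfolding finite_nat_set_iff_bounded by blast
qed

definition heun_coeff :: "nat \<Rightarrow> nat \<Rightarrow> nat \<Rightarrow> real" where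
  "heun_coeff p m k = sqrt (fact k * fact (k + m)) / fact (k - p)"

lemma heun_coeff_pos: "0 < heun_coeff p m k"
  unfolding heun_coeff_def by simp

lemma heun_up_eq: "heun_up p m k = (if p \<le> k then of_real (heun_coeff p m k) else 0)"
  unfolding heun_up_def heun_coeff_def by simp

lemma cnj_heun_up: "cnj (heun_up p m k) = heun_up p m k"
  unfolding heun_up_eq by simp

lemma heun_apply_eq:
  "heun_apply p m c j =
     (if m \<le> j then heun_up p m (j - m) * c (j - m) else 0) + heun_up p m j * c (j + m)"
proof -
  have "heun_down p m (j + m) = heun_up p m j"
    unfolding heun_up_def heun_down_def by (simp add: mult.commute add.commute)
  then show ?thesis unfolding heun_apply_def by simp
qed

lemma heun_apply_below: "j < p \<Longrightarrow> heun_apply p m c j = 0"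
  unfolding heun_apply_eq heun_up_eq by auto

lemma heun_apply_finite_support:
  assumes "finite {k. c k \<noteq> 0}"
  shows "finite {j. heun_apply p m c j \<noteq> 0}"
proof -
  obtain N where "\<forall>k\<ge>N. c k = 0" using assms finite_support_iff_eventually_zero by blast
  then have "\<forall>j\<ge>N + m. heun_apply p m c j = 0" by (simp add: heun_apply_eq)
  then show ?thesis using finite_support_iff_eventually_zero by blast
qed

lemma heun_apply_symmetric:
  assumes "finite {k. c k \<noteq> 0}"
  shows "l2_inner (heun_apply p m c) g = l2_inner c (heun_apply p m g)"
proof -
  obtain N where N: "\<And>k. c k \<noteq> 0 \<Longrightarrow> k < N"
    using assms finite_nat_set_iff_bounded by auto
  let ?U = "heun_up p m"
  define A where "A k = ?U k * c k * cnj (g (k + m))" for k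
  define B where "B k = ?U k * c (k + m) * cnj (g k)" for k
  define shifted where "shifted f j = (if m \<le> j then f (j - m) else 0)"
    for f :: "nat \<Rightarrow> complex" and j
  have "summable A" "summable B"
    by (intro summable_finite[of "{..<N}"]; auto simp: A_def B_def dest: N add_lessD1)+
  moreover have shift: "shifted f sums suminf f" if "summable f" for f
    using sums_zero_iff_shift[of m "shifted f" "suminf f"] summable_sums[OF that]
    by (simp add: shifted_def[abs_def])
  ultimately have "(\<lambda>j. shifted A j + B j) sums (suminf A + suminf B)"
    and "(\<lambda>k. A k + shifted B k) sums (suminf A + suminf B)"
    by (auto intro!: sums_add)
  moreover have "l2_inner (heun_apply p m c) g = (\<Sum>j. shifted A j + B j)"
    unfolding l2_inner_def heun_apply_eq
    by (rule arg_cong[where f = suminf]) (auto simp: shifted_def A_def B_def algebra_simps)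
  moreover have "l2_inner c (heun_apply p m g) = (\<Sum>k. A k + shifted B k)"
    unfolding l2_inner_def heun_apply_eq
    by (rule arg_cong[where f = suminf]) (auto simp: shifted_def A_def B_def cnj_heun_up algebra_simps)
  ultimately show ?thesis by (simp add: sums_iff)
qed

definition unit_seq :: "nat \<Rightarrow> nat \<Rightarrow> complex" where
  "unit_seq j k = (if k = j then 1 else 0)"

lemma l2_inner_unit_seq_left: "l2_inner (unit_seq j) x = cnj (x j)"
  unfolding l2_inner_def unit_seq_def by (subst suminf_finite[of "{j}"]) auto

lemma poly_in_heun_min_graph:
  assumes "c \<in> poly_Bp p"
  shows "(c, heun_apply p m c) \<in> heun_min_graph p m"
proof -
  have fin: "finite {k. c k \<noteq> 0}" and below: "\<forall>k<p. c k = 0"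
    using assms by (auto simp: poly_Bp_def)
  have "c \<in> Bp p" using l2_finite_support[OF fin] below by (simp add: Bp_def)
  moreover have "heun_apply p m c \<in> Bp p"
    using l2_finite_support[OF heun_apply_finite_support[OF fin]] heun_apply_below
    by (simp add: Bp_def)
  moreover have "l2_norm (d - d) = 0" for d by (simp add: l2_norm_def)
  ultimately show ?thesis
    unfolding heun_min_graph_def using assms by (auto intro!: exI[of _ "\<lambda>n. c"])
qed

lemma heun_adj_kernel_imp_eigen:
  assumes "g \<in> heun_adj_kernel p m lam"
  shows "g \<in> Bp p" "heun_apply p m g = seq_scale lam g"
proof -
  show g: "g \<in> Bp p" using assms by (simp add: heun_adj_kernel_def heun_adj_graph_def)
  have adj: "\<And>f u. (f, u) \<in> heun_min_graph p m
      \<Longrightarrow> l2_inner u g = l2_inner f (seq_scale lam g)"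
    using assms by (auto simp: heun_adj_kernel_def heun_adj_graph_def)
  have "heun_apply p m g j = seq_scale lam g j" for j
  proof (cases "j < p")
    case True
    then show ?thesis using g heun_apply_below by (simp add: Bp_def seq_scale_def)
  next
    case False
    have fin: "finite {k. unit_seq j k \<noteq> 0}" by (simp add: unit_seq_def)
    with False have "unit_seq j \<in> poly_Bp p" by (simp add: poly_Bp_def unit_seq_def)
    from adj[OF poly_in_heun_min_graph[OF this]]
    have "cnj (heun_apply p m g j) = cnj (seq_scale lam g j)"
      by (simp add: heun_apply_symmetric[OF fin] l2_inner_unit_seq_left)
    then show ?thesis by simp
  qed
  then show "heun_apply p m g = seq_scale lam g" by blast
qed

lemma eigen_in_heun_adj_kernel:
  assumes g: "g \<in> Bp p" and eigen: "heun_apply p m g = seq_scale lam g"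
  shows "g \<in> heun_adj_kernel p m lam"
proof -
  have lam_g: "seq_scale lam g \<in> Bp p" using g l2_scale by (simp add: Bp_def seq_scale_def)
  have "l2_inner u g = l2_inner f (seq_scale lam g)" if fu: "(f, u) \<in> heun_min_graph p m" for f u
  proof -
    obtain c where c: "\<And>n. c n \<in> poly_Bp p"
      and lim_f: "(\<lambda>n. l2_norm (c n - f)) \<longlonglongrightarrow> 0"
      and lim_u: "(\<lambda>n. l2_norm (heun_apply p m (c n) - u)) \<longlonglongrightarrow> 0"
      and "f \<in> Bp p" "u \<in> Bp p"
      using fu unfolding heun_min_graph_def by auto
    have "c n \<in> l2" "heun_apply p m (c n) \<in> l2" for n
      using poly_in_heun_min_graph[OF c] by (auto simp: heun_min_graph_def Bp_def)
    with \<open>f \<in> Bp p\<close> \<open>u \<in> Bp p\<close> g lam_g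
    have "(\<lambda>n. l2_inner (heun_apply p m (c n)) g) \<longlonglongrightarrow> l2_inner u g"
      and "(\<lambda>n. l2_inner (c n) (seq_scale lam g)) \<longlonglongrightarrow> l2_inner f (seq_scale lam g)"
      using lim_f lim_u by (auto intro!: tendsto_l2_inner_left simp: Bp_def)
    moreover have "l2_inner (heun_apply p m (c n)) g = l2_inner (c n) (seq_scale lam g)" for n
      using c[of n] heun_apply_symmetric eigen by (simp add: poly_Bp_def)
    ultimately show ?thesis using LIMSEQ_unique by simp
  qed
  then show ?thesis
    unfolding heun_adj_kernel_def heun_adj_graph_def using g lam_g by auto
qed

lemma heun_adj_kernel_eq:
  "heun_adj_kernel p m lam = {g \<in> Bp p. heun_apply p m g = seq_scale lam g}"
  using heun_adj_kernel_imp_eigen eigen_in_heun_adj_kernel by blast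

lemma heun_coeff_shift:
  "heun_coeff p m (p + t) = pochhammer (real t + 1) p * sqrt (pochhammer (real (p + t) + 1) m)"
proof -
  have fact_p: "(fact (p + t) :: real) = fact t * pochhammer (real t + 1) p"
    using fact_add_eq_fact_mult_pochhammer[of t p] by (simp add: add.commute)
  have "(fact (p + t) :: real) * fact (p + t + m)
      = (fact (p + t))\<^sup>2 * pochhammer (real (p + t) + 1) m"
    using fact_add_eq_fact_mult_pochhammer[of "p + t" m] by (simp add: power2_eq_square)
  then have "sqrt (fact (p + t) * fact (p + t + m))
      = fact (p + t) * sqrt (pochhammer (real (p + t) + 1) m)"
    by (simp add: real_sqrt_mult)
  then show ?thesis unfolding heun_coeff_def fact_p by simp
qed

lemma heun_coeff_log_concave:
  assumes "p \<le> k"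
  shows "heun_coeff p m k * heun_coeff p m (k + 2 * d) \<le> (heun_coeff p m (k + d))\<^sup>2"
proof -
  obtain t where k: "k = p + t" using assms le_Suc_ex by blast
  define x where "x = real t + 1"
  define y where "y = real (p + t) + 1"
  have "0 < x" "0 < y" by (simp_all add: x_def y_def)
  have shift: "heun_coeff p m (k + e) = pochhammer (x + e) p * sqrt (pochhammer (y + e) m)" for e
    using heun_coeff_shift[of p m "t + e"] by (simp add: k x_def y_def algebra_simps)
  have "sqrt (pochhammer y m) * sqrt (pochhammer (y + 2 * d) m) \<le> pochhammer (y + d) m"
    using pochhammer_log_concave[of y d m] \<open>0 < y\<close>
    by (simp add: real_sqrt_mult[symmetric] real_le_lsqrt pochhammer_nonneg)
  moreover have "pochhammer x p * pochhammer (x + 2 * d) p \<le> (pochhammer (x + d) p)\<^sup>2"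
    using pochhammer_log_concave[of x d p] \<open>0 < x\<close> by simp
  ultimately have "(pochhammer x p * pochhammer (x + 2 * d) p)
        * (sqrt (pochhammer y m) * sqrt (pochhammer (y + 2 * d) m))
      \<le> (pochhammer (x + d) p)\<^sup>2 * pochhammer (y + d) m"
    using \<open>0 < x\<close> \<open>0 < y\<close> by (intro mult_mono) (simp_all add: pochhammer_nonneg)
  then show ?thesis
    unfolding shift[of 0, simplified] shift[of d] shift[of "2 * d"] using \<open>0 < y\<close>
    by (simp add: power_mult_distrib pochhammer_nonneg mult_ac)
qed

lemma heun_coeff_shift_le:
  assumes "p \<le> k"
  shows "heun_coeff p m (k + d) \<le> (1 + d) ^ p * sqrt ((1 + d) ^ m) * heun_coeff p m k"
proof -
  obtain t where k: "k = p + t" using assms le_Suc_ex by blast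
  define x where "x = real t + 1"
  define y where "y = real (p + t) + 1"
  have "1 \<le> x" "1 \<le> y" by (simp_all add: x_def y_def)
  have shift: "heun_coeff p m (k + e) = pochhammer (x + e) p * sqrt (pochhammer (y + e) m)" for e
    using heun_coeff_shift[of p m "t + e"] by (simp add: k x_def y_def algebra_simps)
  have "pochhammer (x + d) p \<le> (1 + d) ^ p * pochhammer x p"
    using pochhammer_shift_le[OF \<open>1 \<le> x\<close>] by simp
  moreover have "sqrt (pochhammer (y + d) m) \<le> sqrt ((1 + d) ^ m) * sqrt (pochhammer y m)"
    using pochhammer_shift_le[OF \<open>1 \<le> y\<close>] by (simp add: real_sqrt_mult[symmetric])
  ultimately have "pochhammer (x + d) p * sqrt (pochhammer (y + d) m)
      \<le> ((1 + d) ^ p * pochhammer x p) * (sqrt ((1 + d) ^ m) * sqrt (pochhammer y m))"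
    using \<open>1 \<le> x\<close> \<open>1 \<le> y\<close> by (intro mult_mono) (simp_all add: pochhammer_nonneg)
  then show ?thesis unfolding shift[of d] shift[of 0, simplified] by (simp add: mult_ac)
qed

lemma heun_coeff_ge_powr: "(real t + 1) powr (real p + real m / 2) \<le> heun_coeff p m (p + t)"
proof -
  have "(real t + 1) powr (real m / 2) = ((real t + 1) powr real m) powr (1 / 2)"
    by (simp add: powr_powr)
  also have "\<dots> = sqrt ((real t + 1) ^ m)" by (simp add: powr_realpow powr_half_sqrt)
  finally have "(real t + 1) powr (real p + real m / 2) = (real t + 1) ^ p * sqrt ((real t + 1) ^ m)"
    by (simp add: powr_add powr_realpow)
  also have "\<dots> \<le> pochhammer (real t + 1) p * sqrt (pochhammer (real (p + t) + 1) m)"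
  proof (intro mult_mono real_sqrt_le_mono)
    show "(real t + 1) ^ p \<le> pochhammer (real t + 1) p" by (simp add: pochhammer_ge_power)
    have "(real t + 1) ^ m \<le> (real (p + t) + 1) ^ m" by (intro power_mono) auto
    also have "\<dots> \<le> pochhammer (real (p + t) + 1) m" by (rule pochhammer_ge_power) simp
    finally show "(real t + 1) ^ m \<le> pochhammer (real (p + t) + 1) m" .
  qed (simp_all add: pochhammer_nonneg)
  finally show ?thesis by (simp add: heun_coeff_shift)
qed

lemma summable_inverse_heun_coeff:
  assumes "real p + real m / 2 > 1"
  shows "summable (\<lambda>t. 1 / heun_coeff p m (p + t))"
proof (rule summable_comparison_test')
  have "summable (\<lambda>t. real t powr - (real p + real m / 2))"
    using assms by (simp add: summable_real_powr_iff)
  then show "summable (\<lambda>t. (real t + 1) powr - (real p + real m / 2))"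
    using summable_iff_shift[of "\<lambda>t. real t powr - (real p + real m / 2)" 1]
    by (simp add: add.commute)
  fix t
  have "1 / heun_coeff p m (p + t) \<le> 1 / (real t + 1) powr (real p + real m / 2)"
    using heun_coeff_ge_powr heun_coeff_pos by (intro divide_left_mono) auto
  then show "norm (1 / heun_coeff p m (p + t)) \<le> (real t + 1) powr - (real p + real m / 2)"
    unfolding powr_minus_divide using heun_coeff_pos[of p m "p + t"] by simp
qed

lemma heun_eigen_in_l2:
  assumes "m \<ge> 1" and "real p + real m / 2 > 1"
    and eigen: "heun_apply p m g = seq_scale lam g"
  shows "g \<in> l2"
proof -
  define b where "b t = heun_coeff p m (p + t)" for t
  have rec: "of_real (b (t + m)) * g (p + (t + 2 * m)) + of_real (b t) * g (p + t)
      = lam * g (p + (t + m))" for t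
  proof -
    have "of_real (b t) * g (p + t) + of_real (b (t + m)) * g (p + (t + 2 * m))
        = lam * g (p + (t + m))"
      using fun_cong[OF eigen, of "p + (t + m)"]
      by (simp add: heun_apply_eq heun_up_eq seq_scale_def b_def mult_2 add.assoc)
    then show ?thesis by (simp add: add.commute)
  qed
  have "summable (\<lambda>t. (cmod (g (p + t)))\<^sup>2)"
  proof (rule three_term_recurrence_square_summable[where b = b and lam = lam
        and C = "(1 + m) ^ p * sqrt ((1 + m) ^ m)"])
    show "0 < b t" for t by (simp add: b_def heun_coeff_pos)
    show "b t * b (t + 2 * m) \<le> (b (t + m))\<^sup>2" for t
      using heun_coeff_log_concave[of p "p + t" m m] by (simp add: b_def add.assoc)
    show "b (t + m) \<le> (1 + m) ^ p * sqrt ((1 + m) ^ m) * b t" for t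
      using heun_coeff_shift_le[of p "p + t" m m] by (simp add: b_def add.assoc)
    show "summable (\<lambda>t. 1 / b t)"
      unfolding b_def by (rule summable_inverse_heun_coeff[OF assms(2)])
  qed (use \<open>m \<ge> 1\<close> rec in simp_all)
  then show ?thesis
    unfolding l2_def using summable_iff_shift[of "\<lambda>t. (cmod (g t))\<^sup>2" p] by (simp add: add.commute)
qed

(* Solve the equation (H g)_(j-m) = lam g_(j-m) for g_j; the values g_p, ..., g_(p+m-1) are
   prescribed by v, and the branch m = 0 only makes the recursion terminate. *)
fun heun_eigen_solution ::
  "nat \<Rightarrow> nat \<Rightarrow> complex \<Rightarrow> (nat \<Rightarrow> complex) \<Rightarrow> nat \<Rightarrow> complex" where
  "heun_eigen_solution p m lam v j =
     (if j < p then 0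
      else if j < p + m then v (j - p)
      else if m = 0 then 0
      else (lam * heun_eigen_solution p m lam v (j - m)
            - (if m \<le> j - m
               then heun_up p m (j - 2 * m) * heun_eigen_solution p m lam v (j - 2 * m) else 0))
           / heun_up p m (j - m))"

declare heun_eigen_solution.simps [simp del]

lemma heun_eigen_solution_below: "j < p \<Longrightarrow> heun_eigen_solution p m lam v j = 0"
  by (simp add: heun_eigen_solution.simps)

lemma heun_eigen_solution_initial: "i < m \<Longrightarrow> heun_eigen_solution p m lam v (p + i) = v i"
  by (simp add: heun_eigen_solution.simps)

lemma heun_eigen_solution_eigen:
  assumes "m \<ge> 1"
  shows "heun_apply p m (heun_eigen_solution p m lam v)
    = seq_scale lam (heun_eigen_solution p m lam v)"
proof
  fix i
  let ?g = "heun_eigen_solution p m lam v"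
  show "heun_apply p m ?g i = seq_scale lam ?g i"
  proof (cases "i < p")
    case True
    then show ?thesis by (simp add: heun_apply_below heun_eigen_solution_below seq_scale_def)
  next
    case False
    then have "heun_up p m i \<noteq> 0"
      by (simp add: heun_up_eq heun_coeff_pos[THEN less_imp_neq, symmetric])
    moreover have "?g (i + m) = (lam * ?g i
        - (if m \<le> i then heun_up p m (i - m) * ?g (i - m) else 0)) / heun_up p m i"
      using False assms by (subst heun_eigen_solution.simps) (simp add: mult_2)
    ultimately show ?thesis
      by (cases "m \<le> i") (simp_all add: heun_apply_eq seq_scale_def field_simps)
  qed
qed

lemma heun_eigen_unique:
  assumes "m \<ge> 1"
    and g: "heun_apply p m g = seq_scale lam g" and h: "heun_apply p m h = seq_scale lam h"
    and initial: "\<And>j. j < p + m \<Longrightarrow> g j = h j"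
  shows "g = h"
proof
  fix j
  show "g j = h j"
  proof (induction j rule: less_induct)
    case (less j)
    show ?case
    proof (cases "j < p + m")
      case True
      then show ?thesis by (rule initial)
    next
      case False
      define i where "i = j - m"
      have j: "j = i + m" "p \<le> i" using False \<open>m \<ge> 1\<close> by (auto simp: i_def)
      have "heun_up p m i * f j
          = lam * f i - (if m \<le> i then heun_up p m (i - m) * f (i - m) else 0)"
        if "heun_apply p m f = seq_scale lam f" for f
        using fun_cong[OF that, of i] by (simp add: heun_apply_eq seq_scale_def j(1) algebra_simps)
      from this[OF g] this[OF h] less.IH[of i] less.IH[of "i - m"]
      have "heun_up p m i * g j = heun_up p m i * h j" using j \<open>m \<ge> 1\<close> by auto
      then show ?thesis
        using j(2) by (simp add: heun_up_eq heun_coeff_pos[THEN less_imp_neq, symmetric])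
    qed
  qed
qed

lemma sum_fun_apply: "(\<Sum>r\<in>A. f r) k = (\<Sum>r\<in>A. f r k)"
  by (induction A rule: infinite_finite_induct) auto

interpretation seq: vector_space seq_scale
  by unfold_locales (auto simp: seq_scale_def fun_eq_iff algebra_simps)

definition heun_eigen_solutions :: "nat \<Rightarrow> nat \<Rightarrow> complex \<Rightarrow> (nat \<Rightarrow> complex) set" where
  "heun_eigen_solutions p m lam = {g. (\<forall>j<p. g j = 0) \<and> heun_apply p m g = seq_scale lam g}"

lemma heun_apply_add: "heun_apply p m (f + g) = heun_apply p m f + heun_apply p m g"
  by (simp add: fun_eq_iff heun_apply_def algebra_simps)

lemma heun_apply_scale: "heun_apply p m (seq_scale a f) = seq_scale a (heun_apply p m f)"
  by (simp add: fun_eq_iff heun_apply_def seq_scale_def algebra_simps)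

lemma subspace_heun_eigen_solutions: "seq.subspace (heun_eigen_solutions p m lam)"
  unfolding seq.subspace_def heun_eigen_solutions_def
  by (auto simp: heun_apply_add heun_apply_scale)
    (auto simp: seq_scale_def fun_eq_iff heun_apply_def algebra_simps)

definition heun_eigen_basis :: "nat \<Rightarrow> nat \<Rightarrow> complex \<Rightarrow> nat \<Rightarrow> nat \<Rightarrow> complex" where
  "heun_eigen_basis p m lam r = heun_eigen_solution p m lam (unit_seq r)"

lemma heun_eigen_basis_initial:
  "i < m \<Longrightarrow> heun_eigen_basis p m lam r (p + i) = (if i = r then 1 else 0)"
  by (simp add: heun_eigen_basis_def heun_eigen_solution_initial unit_seq_def)

lemma heun_eigen_basis_mem:
  "m \<ge> 1 \<Longrightarrow> heun_eigen_basis p m lam r \<in> heun_eigen_solutions p m lam"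
  by (simp add: heun_eigen_solutions_def heun_eigen_basis_def heun_eigen_solution_below
      heun_eigen_solution_eigen)

lemma inj_on_heun_eigen_basis: "inj_on (heun_eigen_basis p m lam) {..<m}"
proof (rule inj_onI)
  fix r r' assume "r \<in> {..<m}" "r' \<in> {..<m}"
    and "heun_eigen_basis p m lam r = heun_eigen_basis p m lam r'"
  then have "heun_eigen_basis p m lam r (p + r) = heun_eigen_basis p m lam r' (p + r)" "r < m"
    by auto
  then show "r = r'" by (simp add: heun_eigen_basis_initial split: if_splits)
qed

lemma independent_heun_eigen_basis: "seq.independent (heun_eigen_basis p m lam ` {..<m})"
proof
  let ?S = "heun_eigen_basis p m lam"
  assume "seq.dependent (?S ` {..<m})"
  then obtain u where u: "\<exists>v\<in>?S ` {..<m}. u v \<noteq> 0"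
    and "(\<Sum>v\<in>?S ` {..<m}. seq_scale (u v) v) = 0"
    using seq.dependent_finite[of "?S ` {..<m}"] by blast
  then have sum0: "(\<Sum>r<m. seq_scale (u (?S r)) (?S r)) = 0"
    by (simp add: sum.reindex[OF inj_on_heun_eigen_basis])
  have "u (?S i) = 0" if "i < m" for i
  proof -
    have "u (?S i) = (\<Sum>r<m. if r = i then u (?S r) else 0)" using that by simp
    also have "\<dots> = (\<Sum>r<m. u (?S r) * ?S r (p + i))"
      using that by (intro sum.cong) (auto simp: heun_eigen_basis_initial)
    also have "\<dots> = 0"
      using arg_cong[OF sum0, of "\<lambda>f. f (p + i)"] by (simp add: sum_fun_apply seq_scale_def)
    finally show ?thesis .
  qed
  then show False using u by blast
qed

lemma heun_eigen_solutions_subset_span: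
  assumes "m \<ge> 1"
  shows "heun_eigen_solutions p m lam \<subseteq> seq.span (heun_eigen_basis p m lam ` {..<m})"
proof
  let ?S = "heun_eigen_basis p m lam"
  fix g assume g: "g \<in> heun_eigen_solutions p m lam"
  define h where "h = (\<Sum>r<m. seq_scale (g (p + r)) (?S r))"
  have h_span: "h \<in> seq.span (?S ` {..<m})"
    unfolding h_def
  proof (rule seq.span_sum)
    fix r assume "r \<in> {..<m}"
    then have "?S r \<in> seq.span (?S ` {..<m})" by (intro seq.span_base imageI)
    then show "seq_scale (g (p + r)) (?S r) \<in> seq.span (?S ` {..<m})" by (rule seq.span_scale)
  qed
  have h_eigen: "h \<in> heun_eigen_solutions p m lam"
    unfolding h_def using subspace_heun_eigen_solutions
    by (intro seq.subspace_sum seq.subspace_scale heun_eigen_basis_mem[OF assms])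
  have "g j = h j" if "j < p + m" for j
  proof (cases "j < p")
    case True
    then show ?thesis using g h_eigen by (simp add: heun_eigen_solutions_def)
  next
    case False
    define i where "i = j - p"
    have j: "j = p + i" and "i < m" using False that by (simp_all add: i_def)
    have "h j = (\<Sum>r<m. g (p + r) * ?S r (p + i))"
      by (simp add: h_def j seq_scale_def sum_fun_apply)
    also have "\<dots> = (\<Sum>r<m. if r = i then g (p + r) else 0)"
      using \<open>i < m\<close> by (intro sum.cong) (auto simp: heun_eigen_basis_initial)
    also have "\<dots> = g j" using \<open>i < m\<close> by (simp add: j)
    finally show ?thesis by simp
  qed
  with g h_eigen have "g = h"
    unfolding heun_eigen_solutions_def by (blast intro: heun_eigen_unique[OF assms])
  with h_span show "g \<in> seq.span (?S ` {..<m})" by simp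
qed

lemma dim_heun_eigen_solutions:
  assumes "m \<ge> 1"
  shows "seq.dim (heun_eigen_solutions p m lam) = m"
proof (rule seq.dim_unique)
  show "heun_eigen_basis p m lam ` {..<m} \<subseteq> heun_eigen_solutions p m lam"
    using heun_eigen_basis_mem[OF assms] by blast
  show "card (heun_eigen_basis p m lam ` {..<m}) = m"
    using card_image[OF inj_on_heun_eigen_basis] by simp
qed (simp_all add: heun_eigen_solutions_subset_span[OF assms] independent_heun_eigen_basis)

theorem theorem3p5:
  fixes p m :: nat
  assumes "p \<ge> 1" and "m \<ge> 1" and "real p + real m / 2 > 1"
  shows "def_plus p m = m \<and> def_minus p m = m"
proof -
  have "heun_adj_kernel p m lam = heun_eigen_solutions p m lam" for lam
    using heun_eigen_in_l2[OF assms(2,3)]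
    by (auto simp: heun_adj_kernel_eq heun_eigen_solutions_def Bp_def)
  then show ?thesis
    using dim_heun_eigen_solutions[OF assms(2)] by (simp add: def_plus_def def_minus_def)
qed

end
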